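(* Let $G$, $z$, $g_1,\dots,g_{2r}$ be as in the context. Every element $g\in G\setminus\{1,z\}$ can be written as $g=z^{j}g_{s_1}g_{s_2}\cdots g_{s_t}$ with $j\in\{0,1\}$ and $1\le s_1<\dots<s_t\le 2r$, uniquely. For $\sigma\in S_{2r}$ define $\tilde\sigma:G\to G$ by $1^{\tilde\sigma}=1$, $z^{\tilde\sigma}=z$ and $(z^{j}g_{s_1}\cdots g_{s_t})^{\tilde\sigma}=z^{j}g_{s_1^{\sigma}}\cdots g_{s_t^{\sigma}}$. Then each $\tilde\sigma$ is an automorphism of $G$, and the map $\sigma\mapsto\tilde\sigma$ is an injective group homomorphism $S_{2r}\to\mathrm{Aut}(G)$; in particular $S_{2r}$ embeds in $\mathrm{Aut}(G)$ as a group of automorphisms permuting $\{g_1,\dots,g_{2r}\}$.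
   Context: Let $r\ge1$ and $G$ an extraspecial $2$-group of order $2^{2r+1}$ (i.e. $|Z(G)|=2$ and $G/Z(G)\cong\mathbb{Z}_2^{2r}$), with $Z=Z(G)=\langle z\rangle$. Identify $Z$ with $\mathbb{F}_2$ and view $G/Z$ as an $\mathbb{F}_2$-space with quadratic form $Q(Zx)=x^2$ and associated bilinear form $B(Zx,Zy)=[x,y]$. Assume $G/Z$ has a symmetric basis $\{Zg_1,\dots,Zg_{2r}\}$, i.e. $Q(Zg_i)=0$ for all $i$ and $B(Zg_i,Zg_j)=1$ for $i\ne j$; thus $g_i^2=1$ and $g_ig_j=g_jg_iz$ for $i\ne j$. Permutations act on the right. *)

theory Defs
  imports "HOL-Algebra.Algebra"
begin

definition gword :: "('a, 'b) monoid_scheme \<Rightarrow> 'a \<Rightarrow> (nat \<Rightarrow> 'a) \<Rightarrow> nat \<Rightarrow> nat list \<Rightarrow> 'a" where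
  "gword G z g j ss = z [^]\<^bsub>G\<^esub> j \<otimes>\<^bsub>G\<^esub> foldr (\<lambda>s acc. g s \<otimes>\<^bsub>G\<^esub> acc) ss \<one>\<^bsub>G\<^esub>"

definition gcenter :: "('a, 'b) monoid_scheme \<Rightarrow> 'a set" where
  "gcenter G = {x \<in> carrier G. \<forall>y \<in> carrier G. x \<otimes>\<^bsub>G\<^esub> y = y \<otimes>\<^bsub>G\<^esub> x}"

definition extraspecial2 :: "('a, 'b) monoid_scheme \<Rightarrow> nat \<Rightarrow> 'a \<Rightarrow> bool" where
  "extraspecial2 G r z \<longleftrightarrow> group G \<and> finite (carrier G) \<and> order G = 2 ^ (2 * r + 1)
     \<and> z \<in> carrier G \<and> z \<noteq> \<one>\<^bsub>G\<^esub> \<and> gcenter G = {\<one>\<^bsub>G\<^esub>, z}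
     \<and> comm_group (G Mod gcenter G)
     \<and> (\<forall>C \<in> carrier (G Mod gcenter G). C \<otimes>\<^bsub>(G Mod gcenter G)\<^esub> C = \<one>\<^bsub>(G Mod gcenter G)\<^esub>)"

text \<open>{Zg_1,...,Zg_2r} is a symmetric basis of G/Z: Q(Zg_i) = g_i^2 = 1 (identified with 0 in Z),
  B(Zg_i,Zg_j) = [g_i,g_j] = z for i \<noteq> j, i.e. g_i g_j = g_j g_i z; and the cosets form an
  F_2-basis of G/Z (spanning: G is generated by Z and the g_i; independence: no nonempty
  product of distinct g_i lies in Z).\<close>
definition symmetric_basis :: "('a, 'b) monoid_scheme \<Rightarrow> nat \<Rightarrow> 'a \<Rightarrow> (nat \<Rightarrow> 'a) \<Rightarrow> bool" where
  "symmetric_basis G r z g \<longleftrightarrow>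
     (\<forall>i \<in> {1..2*r}. g i \<in> carrier G \<and> g i \<otimes>\<^bsub>G\<^esub> g i = \<one>\<^bsub>G\<^esub>)
     \<and> (\<forall>i \<in> {1..2*r}. \<forall>j \<in> {1..2*r}. i \<noteq> j \<longrightarrow> g i \<otimes>\<^bsub>G\<^esub> g j = g j \<otimes>\<^bsub>G\<^esub> g i \<otimes>\<^bsub>G\<^esub> z)
     \<and> generate G (insert z (g ` {1..2*r})) = carrier G
     \<and> (\<forall>S \<subseteq> {1..2*r}. gword G z g 0 (sorted_list_of_set S) \<in> {\<one>\<^bsub>G\<^esub>, z} \<longrightarrow> S = {})"

definition nf :: "('a, 'b) monoid_scheme \<Rightarrow> nat \<Rightarrow> 'a \<Rightarrow> (nat \<Rightarrow> 'a) \<Rightarrow> 'a \<Rightarrow> nat \<times> nat set" where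
  "nf G r z g x = (THE p. fst p \<in> {0,1} \<and> snd p \<subseteq> {1..2*r}
                        \<and> x = gword G z g (fst p) (sorted_list_of_set (snd p)))"

text \<open>The map sigma-tilde (restricted to the carrier, as required for elements of AutoGroup G).\<close>
definition tilde :: "('a, 'b) monoid_scheme \<Rightarrow> nat \<Rightarrow> 'a \<Rightarrow> (nat \<Rightarrow> 'a) \<Rightarrow> (nat \<Rightarrow> nat) \<Rightarrow> 'a \<Rightarrow> 'a" where
  "tilde G r z g \<sigma> = (\<lambda>x \<in> carrier G.
      if x = \<one>\<^bsub>G\<^esub> then \<one>\<^bsub>G\<^esub>
      else if x = z then z
      else gword G z g (fst (nf G r z g x)) (map \<sigma> (sorted_list_of_set (snd (nf G r z g x)))))"

end

theory Submission
  imports Defs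
begin

text \<open>Modulo the central involution \<open>z\<close>, the \<open>g\<^sub>i\<close> are commuting involutions, and any two
  distinct ones anticommute: \<open>g\<^sub>a g\<^sub>b = g\<^sub>b g\<^sub>a z\<close>. Hence every word in the \<open>g\<^sub>i\<close> can be sorted,
  cancelling pairs of equal letters, into \<open>z\<^sup>e\<close> times the increasing product of the letters that
  occur an odd number of times. Since the commutation rule is the same for every pair of distinct
  letters, renaming the letters by a permutation \<open>\<sigma>\<close> does not change the exponent \<open>e\<close>; this is
  what makes \<open>\<sigma>\<close>-tilde multiplicative. Independence of the \<open>g\<^sub>i\<close> modulo \<open>Z\<close> makes the
  \<open>2 \<cdot> 2\<^sup>2\<^sup>r\<close> normal forms \<open>z\<^sup>j g\<^sub>S\<close> pairwise distinct, so by counting they exhaust \<open>G\<close>.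
  Then \<open>\<sigma>\<close>-tilde is a bijection with inverse \<open>\<sigma>\<^sup>-\<^sup>1\<close>-tilde, and \<open>\<sigma> \<mapsto> \<sigma>\<close>-tilde is injective
  because it sends \<open>g\<^sub>i\<close> to \<open>g\<^bsub>\<sigma> i\<^esub>\<close> and the \<open>g\<^sub>i\<close> are distinct.\<close>

definition word_prod :: "('a, 'b) monoid_scheme \<Rightarrow> (nat \<Rightarrow> 'a) \<Rightarrow> nat list \<Rightarrow> 'a" where
  "word_prod G g L = foldr (\<lambda>s acc. g s \<otimes>\<^bsub>G\<^esub> acc) L \<one>\<^bsub>G\<^esub>"

lemma word_prod_Nil [simp]: "word_prod G g [] = \<one>\<^bsub>G\<^esub>"
  by (simp add: word_prod_def)

lemma word_prod_Cons [simp]: "word_prod G g (a # L) = g a \<otimes>\<^bsub>G\<^esub> word_prod G g L"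
  by (simp add: word_prod_def)

lemma word_prod_map: "word_prod G g (map \<sigma> L) = word_prod G (g \<circ> \<sigma>) L"
  by (induct L) simp_all

lemma gword_eq: "gword G z g j L = z [^]\<^bsub>G\<^esub> j \<otimes>\<^bsub>G\<^esub> word_prod G g L"
  by (simp add: gword_def word_prod_def)

definition odd_occurrences :: "'a list \<Rightarrow> 'a set" where
  "odd_occurrences L = {a \<in> set L. odd (count_list L a)}"

lemma odd_occurrences_Nil [simp]: "odd_occurrences [] = {}"
  by (simp add: odd_occurrences_def)

lemma odd_occurrences_Cons [simp]:
  "odd_occurrences (a # L) =
     (if a \<in> odd_occurrences L then odd_occurrences L - {a} else insert a (odd_occurrences L))"
  by (auto simp: odd_occurrences_def count_list_0_iff)

lemma odd_occurrences_subset: "odd_occurrences L \<subseteq> set L"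
  by (auto simp: odd_occurrences_def)

lemma finite_odd_occurrences [simp]: "finite (odd_occurrences L)"
  by (simp add: odd_occurrences_def)

lemma odd_occurrences_append:
  "odd_occurrences (xs @ ys) =
     (odd_occurrences xs - odd_occurrences ys) \<union> (odd_occurrences ys - odd_occurrences xs)"
  by (induct xs) auto

lemma odd_occurrences_distinct: "distinct L \<Longrightarrow> odd_occurrences L = set L"
  by (induct L) auto

text \<open>The power of \<open>z\<close> created when the word \<open>L\<close> is normalised from the right: each letter \<open>a\<close>
  is moved past the letters below it in the sorted odd part of the rest of the word.\<close>
fun crossings :: "nat list \<Rightarrow> nat" where
  "crossings [] = 0"
| "crossings (a # L) = card {s \<in> odd_occurrences L. s < a} + crossings L"

lemma sorted_list_of_set_split:
  fixes a :: "'a::linorder"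
  assumes "finite S" "a \<notin> S"
  shows "sorted_list_of_set S =
           filter (\<lambda>s. s < a) (sorted_list_of_set S) @ filter (\<lambda>s. a < s) (sorted_list_of_set S)"
    and "sorted_list_of_set (insert a S) =
           filter (\<lambda>s. s < a) (sorted_list_of_set S) @ a # filter (\<lambda>s. a < s) (sorted_list_of_set S)"
proof -
  let ?l = "sorted_list_of_set S"
  have sorted: "sorted_wrt (<) ?l"
    by (simp add: strict_sorted_list_of_set)
  have trichotomy: "s < a \<or> a < s" if "s \<in> S" for s
    using that assms(2) by (metis linorder_neqE)
  show "?l = filter (\<lambda>s. s < a) ?l @ filter (\<lambda>s. a < s) ?l"
    by (rule strict_sorted_equal)
      (use sorted trichotomy assms in \<open>auto simp: sorted_wrt_append sorted_wrt_filter\<close>)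
  have "sorted_wrt (<) (sorted_list_of_set (insert a S))"
    by (rule strict_sorted_list_of_set)
  moreover have "set (sorted_list_of_set (insert a S)) = insert a S"
    using assms(1) by (rule set_sorted_list_of_set[OF finite.insertI])
  moreover have "sorted_wrt (<) (filter (\<lambda>s. s < a) ?l @ a # filter (\<lambda>s. a < s) ?l)"
    using sorted by (auto simp: sorted_wrt_append sorted_wrt_filter)
  moreover have "set (filter (\<lambda>s. s < a) ?l @ a # filter (\<lambda>s. a < s) ?l) = insert a S"
    using assms trichotomy by auto
  ultimately show "sorted_list_of_set (insert a S) = filter (\<lambda>s. s < a) ?l @ a # filter (\<lambda>s. a < s) ?l"
    by (metis strict_sorted_equal)
qed

lemma set_map_permutes_subset: "\<sigma> permutes A \<Longrightarrow> set L \<subseteq> A \<Longrightarrow> set (map \<sigma> L) \<subseteq> A"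
  using permutes_image by fastforce

locale symmetric_family = group G for G (structure) +
  fixes R :: "nat set" and z :: 'a and g :: "nat \<Rightarrow> 'a"
  assumes z_carrier: "z \<in> carrier G"
    and z_central: "x \<in> carrier G \<Longrightarrow> z \<otimes> x = x \<otimes> z"
    and z_square: "z \<otimes> z = \<one>"
    and g_carrier: "a \<in> R \<Longrightarrow> g a \<in> carrier G"
    and g_square: "a \<in> R \<Longrightarrow> g a \<otimes> g a = \<one>"
    and g_commutator: "a \<in> R \<Longrightarrow> b \<in> R \<Longrightarrow> a \<noteq> b \<Longrightarrow> g a \<otimes> g b = g b \<otimes> g a \<otimes> z"
begin

lemma z_pow_carrier [simp]: "z [^] (n::nat) \<in> carrier G"
  using z_carrier by simp

lemma z_pow_central: "x \<in> carrier G \<Longrightarrow> z [^] (n::nat) \<otimes> x = x \<otimes> z [^] n"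
  using z_carrier z_central by (simp add: group_commutes_pow)

lemma z_pow_parity: "z [^] (n::nat) = (if even n then \<one> else z)"
  by (induct n) (auto simp: z_carrier z_square)

lemma z_pow_add: "z [^] (m + n::nat) = z [^] m \<otimes> z [^] n"
  using z_carrier by (simp add: nat_pow_mult)

lemma z_pow_mult_eq_iff:
  assumes "x \<in> carrier G" "y \<in> carrier G"
  shows "z [^] (n::nat) \<otimes> x = y \<longleftrightarrow> x = z [^] n \<otimes> y"
proof -
  have "z [^] n \<otimes> (z [^] n \<otimes> w) = w" if "w \<in> carrier G" for w
    using that z_pow_add[of n n] z_pow_parity[of "n + n"] by (simp add: m_assoc[symmetric])
  then show ?thesis
    using assms by auto
qed

lemma word_prod_carrier: "set L \<subseteq> R \<Longrightarrow> word_prod G g L \<in> carrier G"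
  by (induct L) (auto simp: g_carrier)

lemma word_prod_sorted_carrier:
  "finite S \<Longrightarrow> S \<subseteq> R \<Longrightarrow> word_prod G g (sorted_list_of_set S) \<in> carrier G"
  by (simp add: word_prod_carrier)

lemma word_prod_append:
  "set xs \<subseteq> R \<Longrightarrow> set ys \<subseteq> R \<Longrightarrow> word_prod G g (xs @ ys) = word_prod G g xs \<otimes> word_prod G g ys"
  by (induct xs) (auto simp: m_assoc g_carrier word_prod_carrier)

lemma g_word_prod_commute:
  assumes "a \<in> R" "set xs \<subseteq> R" "a \<notin> set xs"
  shows "g a \<otimes> word_prod G g xs = z [^] length xs \<otimes> (word_prod G g xs \<otimes> g a)"
  using assms
proof (induct xs)
  case Nil
  then show ?case by (simp add: g_carrier)
next
  case (Cons b xs)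
  let ?n = "length xs" and ?w = "word_prod G g xs"
  have b: "b \<in> R" "b \<noteq> a" and xs: "set xs \<subseteq> R" using Cons.prems by auto
  note carrier = g_carrier[OF \<open>a \<in> R\<close>] g_carrier[OF b(1)] word_prod_carrier[OF xs] z_carrier
  have "g a \<otimes> word_prod G g (b # xs) = (g a \<otimes> g b) \<otimes> ?w"
    using carrier by (simp add: m_assoc)
  also have "\<dots> = g b \<otimes> (z \<otimes> g a) \<otimes> ?w"
    using g_commutator[OF \<open>a \<in> R\<close> b(1)] b carrier z_central[of "g a"] by (simp add: m_assoc)
  also have "\<dots> = g b \<otimes> z \<otimes> (g a \<otimes> ?w)"
    using carrier by (simp add: m_assoc)
  also have "\<dots> = g b \<otimes> (z \<otimes> z [^] ?n) \<otimes> (?w \<otimes> g a)"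
    using Cons carrier by (simp add: m_assoc)
  also have "\<dots> = (g b \<otimes> z [^] Suc ?n) \<otimes> (?w \<otimes> g a)"
    using carrier z_pow_central[OF z_carrier, of ?n] by (simp add: m_assoc)
  also have "\<dots> = (z [^] Suc ?n \<otimes> g b) \<otimes> (?w \<otimes> g a)"
    by (simp only: z_pow_central[OF carrier(2)])
  also have "\<dots> = z [^] length (b # xs) \<otimes> (word_prod G g (b # xs) \<otimes> g a)"
    using carrier by (simp add: m_assoc del: nat_pow_Suc)
  finally show ?case .
qed

lemma g_word_prod_insert:
  assumes "a \<in> R" "set xs \<subseteq> R" "set ys \<subseteq> R" "a \<notin> set xs"
  shows "g a \<otimes> word_prod G g (xs @ ys) = z [^] length xs \<otimes> word_prod G g (xs @ a # ys)"
proof -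
  note carrier = g_carrier[OF assms(1)] word_prod_carrier[OF assms(2)] word_prod_carrier[OF assms(3)]
  have "g a \<otimes> word_prod G g (xs @ ys) = (g a \<otimes> word_prod G g xs) \<otimes> word_prod G g ys"
    using assms carrier by (simp add: word_prod_append m_assoc)
  also have "\<dots> = z [^] length xs \<otimes> (word_prod G g xs \<otimes> (g a \<otimes> word_prod G g ys))"
    using g_word_prod_commute[OF assms(1,2,4)] carrier by (simp add: m_assoc)
  finally show ?thesis
    using assms by (simp add: word_prod_append)
qed

lemma g_word_prod_delete:
  assumes "a \<in> R" "set xs \<subseteq> R" "set ys \<subseteq> R" "a \<notin> set xs"
  shows "g a \<otimes> word_prod G g (xs @ a # ys) = z [^] length xs \<otimes> word_prod G g (xs @ ys)"
proof -
  note carrier = g_carrier[OF assms(1)] word_prod_carrier[OF assms(2)] word_prod_carrier[OF assms(3)]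
  have "g a \<otimes> word_prod G g (xs @ a # ys) = (g a \<otimes> word_prod G g xs) \<otimes> (g a \<otimes> word_prod G g ys)"
    using assms carrier by (simp add: word_prod_append m_assoc)
  also have "\<dots> = z [^] length xs \<otimes> (word_prod G g xs \<otimes> (g a \<otimes> g a) \<otimes> word_prod G g ys)"
    using g_word_prod_commute[OF assms(1,2,4)] carrier by (simp add: m_assoc)
  finally show ?thesis
    using assms carrier by (simp add: g_square word_prod_append)
qed

lemma g_word_prod_sorted:
  assumes "a \<in> R" "odd_occurrences L \<subseteq> R"
  shows "g a \<otimes> word_prod G g (sorted_list_of_set (odd_occurrences L)) =
           z [^] card {s \<in> odd_occurrences L. s < a}
             \<otimes> word_prod G g (sorted_list_of_set (odd_occurrences (a # L)))"
proof -
  define S where "S = odd_occurrences L - {a}"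
  define xs where "xs = filter (\<lambda>s. s < a) (sorted_list_of_set S)"
  define ys where "ys = filter (\<lambda>s. a < s) (sorted_list_of_set S)"
  have S: "finite S" "a \<notin> S" "S \<subseteq> R"
    using assms(2) by (auto simp: S_def)
  have split: "sorted_list_of_set S = xs @ ys" "sorted_list_of_set (insert a S) = xs @ a # ys"
    using sorted_list_of_set_split[OF S(1,2)] by (simp_all add: xs_def ys_def)
  have xs: "set xs \<subseteq> R" "set ys \<subseteq> R" "a \<notin> set xs"
    using S by (auto simp: xs_def ys_def)
  have "card {s \<in> odd_occurrences L. s < a} = card ({s. s < a} \<inter> S)"
    by (auto simp: S_def intro: arg_cong[where f = card])
  also have "\<dots> = length xs"
    using S(1) by (simp add: xs_def distinct_length_filter)
  finally have card: "card {s \<in> odd_occurrences L. s < a} = length xs" .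
  show ?thesis
  proof (cases "a \<in> odd_occurrences L")
    case True
    then have "odd_occurrences L = insert a S" "odd_occurrences (a # L) = S"
      by (auto simp: S_def)
    then show ?thesis
      using g_word_prod_delete[OF assms(1) xs(1,2,3)] split card by simp
  next
    case False
    then have "odd_occurrences L = S" "odd_occurrences (a # L) = insert a S"
      by (auto simp: S_def)
    then show ?thesis
      using g_word_prod_insert[OF assms(1) xs(1,2,3)] split card by simp
  qed
qed

lemma word_prod_normal_form:
  "set L \<subseteq> R \<Longrightarrow>
     word_prod G g L = z [^] crossings L \<otimes> word_prod G g (sorted_list_of_set (odd_occurrences L))"
proof (induct L)
  case Nil
  then show ?case by simp
next
  case (Cons a L)
  let ?w = "\<lambda>L. word_prod G g (sorted_list_of_set (odd_occurrences L))"
  have a: "a \<in> R" and L: "set L \<subseteq> R" and odd: "odd_occurrences L \<subseteq> R"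
    using Cons.prems odd_occurrences_subset[of L] by auto
  have "odd_occurrences (a # L) \<subseteq> R"
    using odd_occurrences_subset Cons.prems by (rule order_trans)
  then have carrier: "g a \<in> carrier G" "?w L \<in> carrier G" "?w (a # L) \<in> carrier G"
    using a odd by (simp_all only: g_carrier word_prod_sorted_carrier finite_odd_occurrences)
  have "word_prod G g (a # L) = (g a \<otimes> z [^] crossings L) \<otimes> ?w L"
    using Cons L carrier by (simp add: m_assoc)
  also have "\<dots> = (z [^] crossings L \<otimes> g a) \<otimes> ?w L"
    by (simp only: z_pow_central[OF carrier(1)])
  also have "\<dots> = z [^] crossings L \<otimes> (g a \<otimes> ?w L)"
    using carrier by (simp add: m_assoc)
  also have "\<dots> = z [^] crossings (a # L) \<otimes> ?w (a # L)"
    using g_word_prod_sorted[OF a odd] carrier by (simp add: z_pow_add m_assoc add.commute)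
  finally show ?case .
qed

lemma word_prod_sorted_mult:
  assumes "finite S" "finite T" "S \<subseteq> R" "T \<subseteq> R"
  shows "\<exists>n. word_prod G g (sorted_list_of_set S) \<otimes> word_prod G g (sorted_list_of_set T) =
               z [^] (n::nat) \<otimes> word_prod G g (sorted_list_of_set ((S - T) \<union> (T - S)))"
proof -
  let ?L = "sorted_list_of_set S @ sorted_list_of_set T"
  have "odd_occurrences ?L = (S - T) \<union> (T - S)"
    using assms by (simp add: odd_occurrences_append odd_occurrences_distinct)
  moreover have "set ?L \<subseteq> R"
    using assms by simp
  ultimately show ?thesis
    using word_prod_normal_form[of ?L] by (auto simp: word_prod_append)
qed

end

text \<open>The relations do not distinguish between indices, so a renamed family satisfies them too and
  is normalised with the same number of crossings.\<close>
lemma symmetric_family_reindex: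
  assumes "symmetric_family G R z g" "inj_on \<sigma> R" "\<sigma> ` R \<subseteq> R"
  shows "symmetric_family G R z (g \<circ> \<sigma>)"
proof -
  interpret symmetric_family G R z g by (rule assms(1))
  have "\<sigma> a \<in> R" if "a \<in> R" for a
    using that assms(3) by blast
  moreover have "\<sigma> a \<noteq> \<sigma> b" if "a \<in> R" "b \<in> R" "a \<noteq> b" for a b
    using that assms(2) by (simp add: inj_on_eq_iff)
  ultimately show ?thesis
    by unfold_locales (auto intro: z_carrier z_central z_square g_carrier g_square g_commutator)
qed

locale extraspecial_basis = symmetric_family G "{1..2*r}" z g for G (structure) and r z g +
  assumes z_neq_one: "z \<noteq> \<one>"
    and independent: "S \<subseteq> {1..2*r} \<Longrightarrow> gword G z g 0 (sorted_list_of_set S) \<in> {\<one>, z} \<Longrightarrow> S = {}"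
    and card_carrier: "card (carrier G) = 2 * 2 ^ (2 * r)"
begin

lemma gword_carrier: "set L \<subseteq> {1..2*r} \<Longrightarrow> gword G z g j L \<in> carrier G"
  by (simp add: gword_eq word_prod_carrier)

lemma gword_sorted_carrier: "S \<subseteq> {1..2*r} \<Longrightarrow> gword G z g j (sorted_list_of_set S) \<in> carrier G"
  by (simp add: gword_eq word_prod_sorted_carrier finite_subset)

lemma gword_mult:
  assumes "set L \<subseteq> {1..2*r}" "set M \<subseteq> {1..2*r}"
  shows "gword G z g j L \<otimes> gword G z g k M = gword G z g (j + k) (L @ M)"
proof -
  note carrier = word_prod_carrier[OF assms(1)] word_prod_carrier[OF assms(2)]
  have "gword G z g j L \<otimes> gword G z g k M = z [^] j \<otimes> ((word_prod G g L \<otimes> z [^] k) \<otimes> word_prod G g M)"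
    using carrier by (simp add: gword_eq m_assoc)
  also have "\<dots> = z [^] j \<otimes> ((z [^] k \<otimes> word_prod G g L) \<otimes> word_prod G g M)"
    by (simp only: z_pow_central[OF carrier(1)])
  also have "\<dots> = (z [^] j \<otimes> z [^] k) \<otimes> (word_prod G g L \<otimes> word_prod G g M)"
    using carrier by (simp add: m_assoc)
  finally show ?thesis
    using assms by (simp add: gword_eq z_pow_add word_prod_append)
qed

lemma gword_parity: "gword G z g j L = gword G z g (j mod 2) L"
  by (simp add: gword_eq z_pow_parity)

lemma gword_coords_inj:
  assumes j: "j \<in> {0,1}" and k: "k \<in> {0,1}" and S: "S \<subseteq> {1..2*r}" and T: "T \<subseteq> {1..2*r}"
    and eq: "gword G z g j (sorted_list_of_set S) = gword G z g k (sorted_list_of_set T)"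
  shows "j = k \<and> S = T"
proof -
  let ?w = "\<lambda>A. word_prod G g (sorted_list_of_set A)"
  let ?D = "(S - T) \<union> (T - S)"
  have fin: "finite S" "finite T" "finite ?D" "?D \<subseteq> {1..2*r}"
    using S T by (auto intro: finite_subset)
  note carrier = word_prod_sorted_carrier[OF fin(1) S] word_prod_sorted_carrier[OF fin(2) T]
    word_prod_sorted_carrier[OF fin(3,4)]
  obtain m :: nat where m: "?w T \<otimes> ?w T = z [^] m"
    using word_prod_sorted_mult[OF fin(2) fin(2) T T] by auto
  obtain n :: nat where n: "?w S \<otimes> ?w T = z [^] n \<otimes> ?w ?D"
    using word_prod_sorted_mult[OF fin(1,2) S T] by blast
  have "?w S = z [^] j \<otimes> (z [^] k \<otimes> ?w T)"
    using eq carrier z_pow_mult_eq_iff[of "?w S" "z [^] k \<otimes> ?w T" j] by (simp add: gword_eq)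
  then have "?w S \<otimes> ?w T = z [^] (j + k + m)"
    using carrier m by (simp add: z_pow_add m_assoc)
  then have "?w ?D = z [^] (n + (j + k + m))"
    using n carrier z_pow_mult_eq_iff[of "?w ?D" "z [^] (j + k + m)" n] by (simp add: z_pow_add)
  then have "gword G z g 0 (sorted_list_of_set ?D) \<in> {\<one>, z}"
    using carrier z_pow_parity[of "n + (j + k + m)"] by (simp add: gword_eq)
  then have "S = T"
    using independent[OF fin(4)] by blast
  then have "z [^] j = z [^] k"
    using eq carrier by (simp add: gword_eq r_cancel)
  then show ?thesis
    using j k z_neq_one \<open>S = T\<close> by (auto simp: z_pow_parity)
qed

lemma gword_coords_surj:
  assumes "x \<in> carrier G"
  shows "\<exists>j S. j \<in> {0,1} \<and> S \<subseteq> {1..2*r} \<and> x = gword G z g j (sorted_list_of_set S)"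
proof -
  let ?f = "\<lambda>p. gword G z g (fst p) (sorted_list_of_set (snd p))"
  let ?D = "{0::nat, 1} \<times> Pow {1..2*r}"
  have "inj_on ?f ?D"
  proof (rule inj_onI)
    fix p q assume "p \<in> ?D" "q \<in> ?D" "?f p = ?f q"
    then have "fst p = fst q \<and> snd p = snd q"
      by (intro gword_coords_inj) auto
    then show "p = q"
      by (simp add: prod_eq_iff)
  qed
  then have "card (?f ` ?D) = card (carrier G)"
    by (simp add: card_image card_cartesian_product card_Pow card_carrier)
  moreover have "?f ` ?D \<subseteq> carrier G"
    using gword_sorted_carrier by auto
  moreover have "finite (carrier G)"
    using card_carrier card_ge_0_finite by force
  ultimately have "?f ` ?D = carrier G"
    by (simp add: card_subset_eq)
  then obtain p where "p \<in> ?D" "x = ?f p"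
    using assms by blast
  then show ?thesis
    by (intro exI[of _ "fst p"] exI[of _ "snd p"]) auto
qed

lemma gword_coords_unique:
  assumes "x \<in> carrier G"
  shows "\<exists>!p. fst p \<in> {0,1} \<and> snd p \<subseteq> {1..2*r}
              \<and> x = gword G z g (fst p) (sorted_list_of_set (snd p))"
proof -
  obtain j S where jS: "j \<in> {0,1}" "S \<subseteq> {1..2*r}" "x = gword G z g j (sorted_list_of_set S)"
    using gword_coords_surj[OF assms] by blast
  show ?thesis
  proof (rule ex1I[of _ "(j, S)"])
    fix p assume "fst p \<in> {0,1} \<and> snd p \<subseteq> {1..2*r}
                    \<and> x = gword G z g (fst p) (sorted_list_of_set (snd p))"
    then have "fst p = j \<and> snd p = S"
      using jS gword_coords_inj by metis
    then show "p = (j, S)"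
      by (simp add: prod_eq_iff)
  qed (use jS in simp)
qed

lemma nf_gword:
  assumes "j \<in> {0,1}" "S \<subseteq> {1..2*r}"
  shows "nf G r z g (gword G z g j (sorted_list_of_set S)) = (j, S)"
  unfolding nf_def
proof (rule the1_equality)
  show "\<exists>!p. fst p \<in> {0,1} \<and> snd p \<subseteq> {1..2*r}
          \<and> gword G z g j (sorted_list_of_set S) = gword G z g (fst p) (sorted_list_of_set (snd p))"
    using assms by (intro gword_coords_unique gword_sorted_carrier)
qed (use assms in simp)

lemma tilde_gword_sorted:
  assumes "j \<in> {0,1}" "S \<subseteq> {1..2*r}"
  shows "tilde G r z g \<sigma> (gword G z g j (sorted_list_of_set S)) = gword G z g j (map \<sigma> (sorted_list_of_set S))"
proof -
  let ?x = "gword G z g j (sorted_list_of_set S)"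
  have x: "?x \<in> carrier G"
    using assms(2) by (rule gword_sorted_carrier)
  have one: "\<one> = gword G z g 0 (sorted_list_of_set {})" and z: "z = gword G z g 1 (sorted_list_of_set {})"
    by (simp_all add: gword_eq z_carrier)
  consider "?x = \<one>" | "?x = z" | "?x \<noteq> \<one>" "?x \<noteq> z"
    by blast
  then show ?thesis
  proof cases
    case 1
    then have "j = 0 \<and> S = {}"
      using gword_coords_inj[OF assms(1) _ assms(2), of 0 "{}"] one by simp
    then show ?thesis
      using 1 x by (simp add: tilde_def)
  next
    case 2
    then have "j = 1 \<and> S = {}"
      using gword_coords_inj[OF assms(1) _ assms(2), of 1 "{}"] z by simp
    then show ?thesis
      using 2 x z_neq_one by (simp add: tilde_def gword_eq z_carrier)
  next
    case 3
    then show ?thesis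
      using x nf_gword[OF assms] by (simp add: tilde_def)
  qed
qed

lemma gword_permute_normal_form:
  assumes \<sigma>: "\<sigma> permutes {1..2*r}" and L: "set L \<subseteq> {1..2*r}"
  shows "gword G z g j (map \<sigma> L) =
           gword G z g (j + crossings L) (map \<sigma> (sorted_list_of_set (odd_occurrences L)))"
proof -
  interpret reindexed: symmetric_family G "{1..2*r}" z "g \<circ> \<sigma>"
    using symmetric_family_axioms permutes_inj_on[OF \<sigma>] permutes_image[OF \<sigma>]
    by (intro symmetric_family_reindex) auto
  have "odd_occurrences L \<subseteq> {1..2*r}"
    using odd_occurrences_subset L by (rule order_trans)
  then show ?thesis
    using reindexed.word_prod_normal_form[OF L] reindexed.word_prod_sorted_carrier
    by (simp add: gword_eq word_prod_map z_pow_add m_assoc)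
qed

lemma tilde_gword:
  assumes \<sigma>: "\<sigma> permutes {1..2*r}" and L: "set L \<subseteq> {1..2*r}"
  shows "tilde G r z g \<sigma> (gword G z g j L) = gword G z g j (map \<sigma> L)"
proof -
  let ?S = "odd_occurrences L" and ?e = "(j + crossings L) mod 2"
  have S: "?S \<subseteq> {1..2*r}"
    using odd_occurrences_subset L by (rule order_trans)
  have "gword G z g j L = gword G z g ?e (sorted_list_of_set ?S)"
    using gword_permute_normal_form[OF permutes_id L] gword_parity by simp
  moreover have "?e \<in> {0,1}"
    by (simp add: mod2_eq_if)
  ultimately have "tilde G r z g \<sigma> (gword G z g j L) = gword G z g ?e (map \<sigma> (sorted_list_of_set ?S))"
    using tilde_gword_sorted[OF _ S] by simp
  also have "\<dots> = gword G z g j (map \<sigma> L)"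
    using gword_permute_normal_form[OF \<sigma> L] gword_parity by metis
  finally show ?thesis .
qed

lemma tilde_carrier:
  assumes \<sigma>: "\<sigma> permutes {1..2*r}" and x: "x \<in> carrier G"
  shows "tilde G r z g \<sigma> x \<in> carrier G"
proof -
  obtain j S where S: "S \<subseteq> {1..2*r}" and xS: "x = gword G z g j (sorted_list_of_set S)"
    using gword_coords_surj[OF x] by blast
  then have L: "set (sorted_list_of_set S) \<subseteq> {1..2*r}"
    by (simp add: finite_subset)
  show ?thesis
    using xS tilde_gword[OF \<sigma> L] gword_carrier[OF set_map_permutes_subset[OF \<sigma> L]] by simp
qed

lemma tilde_mult:
  assumes \<sigma>: "\<sigma> permutes {1..2*r}" and x: "x \<in> carrier G" and y: "y \<in> carrier G"
  shows "tilde G r z g \<sigma> (x \<otimes> y) = tilde G r z g \<sigma> x \<otimes> tilde G r z g \<sigma> y"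
proof -
  obtain j S where S: "S \<subseteq> {1..2*r}" and xS: "x = gword G z g j (sorted_list_of_set S)"
    using gword_coords_surj[OF x] by blast
  obtain k T where T: "T \<subseteq> {1..2*r}" and yT: "y = gword G z g k (sorted_list_of_set T)"
    using gword_coords_surj[OF y] by blast
  let ?L = "sorted_list_of_set S" and ?M = "sorted_list_of_set T"
  have LM: "set ?L \<subseteq> {1..2*r}" "set ?M \<subseteq> {1..2*r}"
    using S T by (simp_all add: finite_subset)
  have "tilde G r z g \<sigma> (x \<otimes> y) = gword G z g (j + k) (map \<sigma> (?L @ ?M))"
    using xS yT LM by (simp add: gword_mult tilde_gword[OF \<sigma>])
  also have "\<dots> = gword G z g j (map \<sigma> ?L) \<otimes> gword G z g k (map \<sigma> ?M)"
    using LM set_map_permutes_subset[OF \<sigma>] by (simp add: gword_mult)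
  also have "\<dots> = tilde G r z g \<sigma> x \<otimes> tilde G r z g \<sigma> y"
    using xS yT LM by (simp add: tilde_gword[OF \<sigma>])
  finally show ?thesis .
qed

lemma tilde_compose:
  assumes \<sigma>: "\<sigma> permutes {1..2*r}" and \<tau>: "\<tau> permutes {1..2*r}" and x: "x \<in> carrier G"
  shows "tilde G r z g \<tau> (tilde G r z g \<sigma> x) = tilde G r z g (\<tau> \<circ> \<sigma>) x"
proof -
  obtain j S where S: "S \<subseteq> {1..2*r}" and xS: "x = gword G z g j (sorted_list_of_set S)"
    using gword_coords_surj[OF x] by blast
  then have L: "set (sorted_list_of_set S) \<subseteq> {1..2*r}"
    by (simp add: finite_subset)
  show ?thesis
    using xS tilde_gword[OF \<sigma> L] tilde_gword[OF \<tau> set_map_permutes_subset[OF \<sigma> L]]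
      tilde_gword[OF permutes_compose[OF \<sigma> \<tau>] L]
    by simp
qed

lemma tilde_id: "x \<in> carrier G \<Longrightarrow> tilde G r z g id x = x"
  using gword_coords_surj tilde_gword[OF permutes_id] by (fastforce simp: finite_subset)

lemma tilde_in_auto:
  assumes \<sigma>: "\<sigma> permutes {1..2*r}"
  shows "tilde G r z g \<sigma> \<in> auto G"
proof -
  have \<sigma>': "Hilbert_Choice.inv \<sigma> permutes {1..2*r}"
    using \<sigma> by (rule permutes_inv)
  have "tilde G r z g \<sigma> \<in> hom G G"
    using tilde_carrier[OF \<sigma>] tilde_mult[OF \<sigma>] by (intro homI) auto
  moreover have "bij_betw (tilde G r z g \<sigma>) (carrier G) (carrier G)"
    by (rule bij_betw_byWitness[where f' = "tilde G r z g (Hilbert_Choice.inv \<sigma>)"])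
      (use tilde_compose[OF \<sigma> \<sigma>'] tilde_compose[OF \<sigma>' \<sigma>] tilde_id tilde_carrier[OF \<sigma>]
        tilde_carrier[OF \<sigma>'] permutes_inv_o[OF \<sigma>] in \<open>auto simp: image_subset_iff\<close>)
  moreover have "tilde G r z g \<sigma> \<in> extensional (carrier G)"
    by (simp add: tilde_def)
  ultimately show ?thesis
    by (simp add: auto_def Bij_def)
qed

lemma tilde_generator:
  assumes \<sigma>: "\<sigma> permutes {1..2*r}" and i: "i \<in> {1..2*r}"
  shows "tilde G r z g \<sigma> (g i) = g (\<sigma> i)"
  using tilde_gword[OF \<sigma>, of "[i]" 0] i g_carrier[OF i] g_carrier[of "\<sigma> i"] permutes_in_image[OF \<sigma>]
  by (simp add: gword_eq)

lemma g_inj_on: "inj_on g {1..2*r}"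
proof (rule inj_onI, rule ccontr)
  fix a b assume ab: "a \<in> {1..2*r}" "b \<in> {1..2*r}" "g a = g b" "a \<noteq> b"
  then have "g a \<otimes> g a = g a \<otimes> g a \<otimes> z"
    using g_commutator[of a b] by simp
  then show False
    using ab z_neq_one g_square g_carrier z_carrier by simp
qed

lemma tilde_hom: "tilde G r z g \<in> hom (sym_group (2*r)) (AutoGroup G)"
proof (rule homI)
  fix \<sigma> assume "\<sigma> \<in> carrier (sym_group (2*r))"
  then show "tilde G r z g \<sigma> \<in> carrier (AutoGroup G)"
    using tilde_in_auto by (simp add: sym_group_def AutoGroup_def BijGroup_def)
next
  fix \<sigma> \<tau> assume "\<sigma> \<in> carrier (sym_group (2*r))" "\<tau> \<in> carrier (sym_group (2*r))"
  then have \<sigma>: "\<sigma> permutes {1..2*r}" and \<tau>: "\<tau> permutes {1..2*r}"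
    by (simp_all add: sym_group_def)
  have "tilde G r z g (\<sigma> \<circ> \<tau>) = compose (carrier G) (tilde G r z g \<sigma>) (tilde G r z g \<tau>)"
  proof
    fix x show "tilde G r z g (\<sigma> \<circ> \<tau>) x = compose (carrier G) (tilde G r z g \<sigma>) (tilde G r z g \<tau>) x"
    proof (cases "x \<in> carrier G")
      case True
      then show ?thesis
        using tilde_compose[OF \<tau> \<sigma>] by (simp add: compose_def)
    next
      case False
      then show ?thesis
        by (simp add: compose_def tilde_def)
    qed
  qed
  moreover have "tilde G r z g \<sigma> \<in> Bij (carrier G)" "tilde G r z g \<tau> \<in> Bij (carrier G)"
    using tilde_in_auto[OF \<sigma>] tilde_in_auto[OF \<tau>] by (simp_all add: auto_def)
  ultimately show "tilde G r z g (\<sigma> \<otimes>\<^bsub>sym_group (2*r)\<^esub> \<tau>) =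
      tilde G r z g \<sigma> \<otimes>\<^bsub>AutoGroup G\<^esub> tilde G r z g \<tau>"
    by (simp add: sym_group_def AutoGroup_def BijGroup_def)
qed

lemma tilde_inj_on: "inj_on (tilde G r z g) (carrier (sym_group (2*r)))"
proof (rule inj_onI)
  fix \<sigma> \<tau> assume "\<sigma> \<in> carrier (sym_group (2*r))" "\<tau> \<in> carrier (sym_group (2*r))"
    and eq: "tilde G r z g \<sigma> = tilde G r z g \<tau>"
  then have \<sigma>: "\<sigma> permutes {1..2*r}" and \<tau>: "\<tau> permutes {1..2*r}"
    by (simp_all add: sym_group_def)
  show "\<sigma> = \<tau>"
  proof
    fix i show "\<sigma> i = \<tau> i"
    proof (cases "i \<in> {1..2*r}")
      case True
      then have "g (\<sigma> i) = g (\<tau> i)"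
        using tilde_generator[OF \<sigma>] tilde_generator[OF \<tau>] eq by metis
      then show ?thesis
        using g_inj_on permutes_in_image[OF \<sigma>] permutes_in_image[OF \<tau>] True by (auto dest: inj_onD)
    next
      case False
      then show ?thesis
        using \<sigma> \<tau> by (simp add: permutes_not_in)
    qed
  qed
qed

end

lemma extraspecial2_z_square:
  fixes G (structure)
  assumes "extraspecial2 G r z"
  shows "z \<otimes> z = \<one>"
proof -
  interpret group G
    using assms by (simp add: extraspecial2_def)
  have z: "z \<in> carrier G" "z \<noteq> \<one>" and centre: "gcenter G = {\<one>, z}"
    using assms by (simp_all add: extraspecial2_def)
  have central: "z \<otimes> y = y \<otimes> z" if "y \<in> carrier G" for y
    using that centre unfolding gcenter_def by blast
  have "z \<otimes> z \<otimes> y = y \<otimes> (z \<otimes> z)" if y: "y \<in> carrier G" for y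
  proof -
    have "z \<otimes> z \<otimes> y = z \<otimes> (y \<otimes> z)"
      using y z central[OF y] by (simp add: m_assoc)
    also have "\<dots> = y \<otimes> (z \<otimes> z)"
      using y z central[OF y] by (simp add: m_assoc[symmetric])
    finally show ?thesis .
  qed
  then have "z \<otimes> z \<in> {\<one>, z}"
    using z(1) centre unfolding gcenter_def by blast
  moreover have "z \<otimes> z \<noteq> z"
    using z by (metis l_cancel_one r_one)
  ultimately show ?thesis
    by blast
qed

lemma extraspecial_basisI:
  fixes G (structure)
  assumes "extraspecial2 G r z" and "symmetric_basis G r z g"
  shows "extraspecial_basis G r z g"
proof -
  interpret group G
    using assms(1) by (simp add: extraspecial2_def)
  have z: "z \<in> carrier G" "z \<noteq> \<one>" "z \<otimes> z = \<one>" "gcenter G = {\<one>, z}"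
    using assms(1) extraspecial2_z_square[OF assms(1)] by (simp_all add: extraspecial2_def)
  have "card (carrier G) = 2 * 2 ^ (2 * r)"
    using assms(1) by (simp add: extraspecial2_def order_def)
  moreover have "z \<otimes> x = x \<otimes> z" if "x \<in> carrier G" for x
    using that z(4) by (auto simp: gcenter_def)
  moreover note z assms(2)[unfolded symmetric_basis_def]
  ultimately show ?thesis
    by (intro extraspecial_basis.intro symmetric_family.intro symmetric_family_axioms.intro
        extraspecial_basis_axioms.intro is_group) blast+
qed

theorem theorem4p1:
  fixes G :: "('a, 'b) monoid_scheme" and r :: nat and z :: 'a and g :: "nat \<Rightarrow> 'a"
  assumes "r \<ge> 1"
    and "extraspecial2 G r z"
    and "symmetric_basis G r z g"
  shows "(\<forall>x \<in> carrier G - {\<one>\<^bsub>G\<^esub>, z}. \<exists>!p. fst p \<in> {0,1} \<and> snd p \<subseteq> {1..2*r}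
            \<and> x = gword G z g (fst p) (sorted_list_of_set (snd p)))
     \<and> (\<forall>\<sigma>. \<sigma> permutes {1..2*r} \<longrightarrow> tilde G r z g \<sigma> \<in> auto G)
     \<and> tilde G r z g \<in> hom (sym_group (2*r)) (AutoGroup G)
     \<and> inj_on (tilde G r z g) (carrier (sym_group (2*r)))
     \<and> (\<forall>\<sigma>. \<sigma> permutes {1..2*r} \<longrightarrow> (\<forall>i \<in> {1..2*r}. tilde G r z g \<sigma> (g i) = g (\<sigma> i)))"
proof -
  interpret extraspecial_basis G r z g
    using assms(2,3) by (rule extraspecial_basisI)
  show ?thesis
    using gword_coords_unique tilde_in_auto tilde_hom tilde_inj_on tilde_generator by blast
qed

end
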